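(* Let $s\in\mathbb N$ and $k,n\in\mathbb N_0$. (i) For $s\le j\le n/2$ and $1\le\ell\le a^d_{n-2j}$, $$P^{-s,n}_{j,\ell}(x)=\frac{(1-n-\frac d2)_j}{(-j)_s\,(1-n-\frac d2+2s)_{j-s}}(\|x\|^2-1)^s\,P^{s,n-2s}_{j-s,\ell}(x).$$ (ii) For $0\le j\le n/2$ and $1\le\ell\le a^d_{n-2j}$, $$\Delta^kP^{-s,n}_{j,\ell}(x)=4^k(n+\tfrac d2-2k)_{2k}\,P^{2k-s,n-2k}_{j-k,\ell}(x)+q(\|x\|^2)\,Y^{n-2j}_\ell(x),$$ where $q$ is a univariate polynomial of degree at most $j_0-k-1$ (so $q=0$ if $j_0-k-1<0$), with $j_0=s+j-n-\frac d2+1$ if this number belongs to $\{1,2,\dots,j\}$ and $j_0=0$ otherwise. In particular $q=0$ if $j+k\ge s$.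
   Context: $(a)_0=1$, $(a)_m=a(a+1)\cdots(a+m-1)$. $\mathcal H^d_m$: homogeneous harmonic polynomials of degree $m$ in $d$ variables, $a^d_m=\dim\mathcal H^d_m$, $\{Y^m_\ell\}_{\ell=1}^{a^d_m}$ a basis of $\mathcal H^d_m$ orthonormal in $L^2$ of the normalized surface measure on $\mathbb S^{d-1}$. Generalized Jacobi polynomials: for $\alpha,\beta\in\mathbb R$, $j\in\mathbb N_0$, let $j_0=-j-\alpha-\beta$ if this number lies in $\{1,\dots,j\}$ and $j_0=0$ otherwise; $\widehat P^{(\alpha,\beta)}_j(t)=\sum_{k=j_0}^j\frac{(k+\alpha+1)_{j-k}}{(j-k)!\,k!\,(j+\alpha+\beta+k+1)_{j-k}}\big(\frac{t-1}2\big)^k$, and $\widehat P^{(\alpha,\beta)}_j=0$ for negative integers $j$. For $\mu\in\mathbb R$, $n\in\mathbb N_0$, $0\le j\le n/2$, $1\le\ell\le a^d_{n-2j}$: $P^{\mu,n}_{j,\ell}(x)=(n-j+\tfrac d2)_j\,\widehat P^{(\mu,n-2j+\frac d2-1)}_j(2\|x\|^2-1)\,Y^{n-2j}_\ell(x)$; by convention $P^{\mu,n}_{j,\ell}=0$ if $j<0$ or $j>n/2$. Note $P^{2k-s,n-2k}_{j-k,\ell}$ involves the harmonic $Y^{n-2j}_\ell$. *)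

theory Defs
  imports "HOL-Analysis.Analysis" "HOL-Computational_Algebra.Polynomial"
begin

text \<open>Points of R^d are vectors of type real^'d, with d = CARD('d).\<close>

definition partial_deriv :: "'d::finite \<Rightarrow> (real^'d \<Rightarrow> real) \<Rightarrow> real^'d \<Rightarrow> real" where
  "partial_deriv i f x = deriv (\<lambda>t. f (x + t *\<^sub>R axis i 1)) 0"

definition laplacian :: "(real^'d::finite \<Rightarrow> real) \<Rightarrow> real^'d \<Rightarrow> real" where
  "laplacian f x = (\<Sum>i\<in>UNIV. partial_deriv i (partial_deriv i f) x)"

definition homogeneous_poly :: "nat \<Rightarrow> (real^'d::finite \<Rightarrow> real) \<Rightarrow> bool" where
  "homogeneous_poly m Y \<longleftrightarrow>
     (\<exists>c :: ('d \<Rightarrow> nat) \<Rightarrow> real.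
        Y = (\<lambda>x. \<Sum>\<alpha>\<in>{\<alpha>. sum \<alpha> UNIV = m}. c \<alpha> * (\<Prod>i\<in>UNIV. (x $ i) ^ \<alpha> i)))"

definition harmonic_space :: "nat \<Rightarrow> (real^'d::finite \<Rightarrow> real) set" where
  "harmonic_space m = {Y. homogeneous_poly m Y \<and> laplacian Y = (\<lambda>_. 0)}"

definition jac_j0 :: "real \<Rightarrow> real \<Rightarrow> nat \<Rightarrow> nat" where
  "jac_j0 a b j = (if \<exists>m::nat. 1 \<le> m \<and> m \<le> j \<and> real m = - real j - a - b
                   then nat \<lfloor>- real j - a - b\<rfloor> else 0)"

definition gen_jacobi :: "real \<Rightarrow> real \<Rightarrow> int \<Rightarrow> real \<Rightarrow> real" where
  "gen_jacobi a b j t = (if j < 0 then 0 else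
     (\<Sum>k = jac_j0 a b (nat j)..nat j.
        pochhammer (real k + a + 1) (nat j - k)
        / (fact (nat j - k) * fact k * pochhammer (real (nat j) + a + b + real k + 1) (nat j - k))
        * ((t - 1) / 2) ^ k))"

text \<open>P^{mu,n}_{j,l}(x), where the harmonic Y plays the role of Y^{n-2j}_l;
  zero if j < 0 or j > n/2.\<close>
definition Pbasis :: "real \<Rightarrow> int \<Rightarrow> int \<Rightarrow> (real^'d::finite \<Rightarrow> real) \<Rightarrow> real^'d \<Rightarrow> real" where
  "Pbasis \<mu> n j Y x = (if 0 \<le> j \<and> 2 * j \<le> n then
      pochhammer (real_of_int (n - j) + real CARD('d) / 2) (nat j)
      * gen_jacobi \<mu> (real_of_int (n - 2 * j) + real CARD('d) / 2 - 1) j (2 * (norm x)\<^sup>2 - 1)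
      * Y x
    else 0)"

end

theory Submission
  imports Defs
begin

text \<open>Write \<open>u = \<parallel>x\<parallel>\<^sup>2 - 1\<close>. Each \<open>Pbasis \<mu> n j Y\<close> is \<open>Q(u) Y(x)\<close> with \<open>Y\<close> harmonic and homogeneous
  of degree \<open>m = n - 2j\<close> and \<open>Q\<close> an explicit polynomial, and Euler's identity for \<open>Y\<close> turns
  \<open>\<Delta>(Q(u) Y)\<close> into \<open>(L Q)(u) Y\<close> with \<open>L = 4(u + 1) \<partial>\<^sup>2 + (4m + 2d) \<partial>\<close>. Everything is thus
  a statement about coefficients of one-variable polynomials.
  For \<open>\<mu> = -s\<close> the factor \<open>(k - s + 1)\<^sub>j\<^sub>-\<^sub>k\<close> kills the coefficients of \<open>u\<^sup>k\<close>, \<open>k < s\<close>, and the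
  remaining ones are those of the parameter \<open>s\<close>, shifted by \<open>u\<^sup>s\<close>: this is (i).
  For (ii), a three-term Pochhammer identity shows that \<open>L\<close> maps the polynomial for
  \<open>(\<mu>, j)\<close> to a multiple of the one for \<open>(\<mu> + 2, j - 1)\<close>, except in the coefficients below
  \<open>j\<^sub>0 - 1\<close>, where the denominators of the generalized Jacobi polynomial vanish. Each further
  application of \<open>L\<close> lowers the degree of the defect by one, and \<open>j\<^sub>0 \<le> k\<close> once \<open>j + k \<ge> s\<close>.\<close>

section \<open>Partial derivatives of polynomial functions\<close>

lemma partial_deriv_eq:
  assumes "(f has_derivative f') (at x)"
  shows "partial_deriv i f x = f' (axis i 1)"
proof -
  have "((\<lambda>t::real. x + t *\<^sub>R axis i 1) has_derivative (\<lambda>t. t *\<^sub>R axis i 1)) (at 0)"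
    by (auto intro!: derivative_eq_intros)
  from has_derivative_compose[OF this] assms
  have "((\<lambda>t. f (x + t *\<^sub>R axis i 1)) has_derivative (\<lambda>t. f' (t *\<^sub>R axis i 1))) (at 0)"
    by simp
  then have "((\<lambda>t. f (x + t *\<^sub>R axis i 1)) has_derivative (\<lambda>t. f' (axis i 1) * t)) (at 0)"
    using linear_scale[OF has_derivative_linear[OF assms]] by (simp add: mult_commute_abs)
  then have "((\<lambda>t. f (x + t *\<^sub>R axis i 1)) has_real_derivative f' (axis i 1)) (at 0)"
    by (simp add: has_field_derivative_def)
  then show ?thesis
    unfolding partial_deriv_def by (rule DERIV_imp_deriv)
qed

lemma real_polynomial_function_has_derivative:
  assumes "real_polynomial_function f"
  obtains f' where "\<And>x. (f has_derivative f' x) (at x)"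
    and "\<And>v. real_polynomial_function (\<lambda>x. f' x v)"
proof -
  from assms have "\<exists>f'. (\<forall>x. (f has_derivative f' x) (at x))
                   \<and> (\<forall>v. real_polynomial_function (\<lambda>x. f' x v))"
  proof induction
    case (linear f)
    then show ?case
      by (intro exI[of _ "\<lambda>x. f"]) (auto intro: bounded_linear_imp_has_derivative)
  next
    case (const c)
    show ?case
      by (intro exI[of _ "\<lambda>x h. 0"]) auto
  next
    case (add f g)
    then obtain f' g'
      where "\<forall>x. (f has_derivative f' x) (at x)" "\<forall>v. real_polynomial_function (\<lambda>x. f' x v)"
        and "\<forall>x. (g has_derivative g' x) (at x)" "\<forall>v. real_polynomial_function (\<lambda>x. g' x v)"
      by blast
    then show ?case
      by (intro exI[of _ "\<lambda>x h. f' x h + g' x h"]) (auto intro!: has_derivative_add)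
  next
    case (mult f g)
    then obtain f' g'
      where "\<forall>x. (f has_derivative f' x) (at x)" "\<forall>v. real_polynomial_function (\<lambda>x. f' x v)"
        and "\<forall>x. (g has_derivative g' x) (at x)" "\<forall>v. real_polynomial_function (\<lambda>x. g' x v)"
      by blast
    then show ?case
      using mult.hyps
      by (intro exI[of _ "\<lambda>x h. f x * g' x h + f' x h * g x"])
        (auto intro!: has_derivative_mult real_polynomial_function.intros(3,4))
  qed
  then show ?thesis using that by blast
qed

lemma real_polynomial_function_partial_deriv:
  fixes f :: "real^'d::finite \<Rightarrow> real"
  assumes "real_polynomial_function f"
  shows "real_polynomial_function (partial_deriv i f)"
proof -
  obtain f' where f': "\<And>x. (f has_derivative f' x) (at x)"
    and rpf: "\<And>v. real_polynomial_function (\<lambda>x. f' x v)"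
    using real_polynomial_function_has_derivative[OF assms] by blast
  have "partial_deriv i f = (\<lambda>x. f' x (axis i 1))"
    using partial_deriv_eq[OF f'] by blast
  then show ?thesis
    using rpf by simp
qed

lemma real_polynomial_function_poly:
  "real_polynomial_function f \<Longrightarrow> real_polynomial_function (\<lambda>x. poly q (f x))"
  by (induction q) auto

lemma partial_deriv_add:
  assumes "f differentiable (at x)" "g differentiable (at x)"
  shows "partial_deriv i (\<lambda>x. f x + g x) x = partial_deriv i f x + partial_deriv i g x"
proof -
  obtain f' g' where f': "(f has_derivative f') (at x)" and g': "(g has_derivative g') (at x)"
    using assms unfolding differentiable_def by blast
  show ?thesis
    using partial_deriv_eq[OF has_derivative_add[OF f' g']]
    by (simp add: partial_deriv_eq[OF f'] partial_deriv_eq[OF g'])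
qed

lemma partial_deriv_mult:
  assumes "f differentiable (at x)" "g differentiable (at x)"
  shows "partial_deriv i (\<lambda>x. f x * g x) x = partial_deriv i f x * g x + f x * partial_deriv i g x"
proof -
  obtain f' g' where f': "(f has_derivative f') (at x)" and g': "(g has_derivative g') (at x)"
    using assms unfolding differentiable_def by blast
  show ?thesis
    using partial_deriv_eq[OF has_derivative_mult[OF f' g']]
    by (simp add: partial_deriv_eq[OF f'] partial_deriv_eq[OF g'])
qed

lemma partial_deriv_poly_comp:
  assumes "f differentiable (at x)"
  shows "partial_deriv i (\<lambda>x. poly q (f x)) x = poly (pderiv q) (f x) * partial_deriv i f x"
proof -
  obtain f' where f': "(f has_derivative f') (at x)"
    using assms unfolding differentiable_def by blast
  moreover have "(poly q has_derivative (\<lambda>h. poly (pderiv q) (f x) * h)) (at (f x))"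
    using poly_DERIV[of q "f x"] by (simp add: has_field_derivative_def mult_commute_abs)
  ultimately have "((\<lambda>x. poly q (f x)) has_derivative (\<lambda>h. poly (pderiv q) (f x) * f' h)) (at x)"
    using has_derivative_compose by blast
  then show ?thesis
    by (simp add: partial_deriv_eq partial_deriv_eq[OF f'])
qed

lemma partial_deriv_norm_sq:
  "partial_deriv i (\<lambda>x::real^'d::finite. (norm x)\<^sup>2 - c) x = 2 * x $ i"
proof -
  have "((\<lambda>x::real^'d. x \<bullet> x - c) has_derivative (\<lambda>h. x \<bullet> h + h \<bullet> x)) (at x)"
    by (auto intro!: derivative_eq_intros)
  then show ?thesis
    by (simp add: partial_deriv_eq power2_norm_eq_inner inner_axis inner_commute)
qed

lemma partial_deriv_scaled_component:
  "partial_deriv i (\<lambda>x::real^'d::finite. c * x $ i) x = c"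
proof -
  have "((\<lambda>x::real^'d. c * x $ i) has_derivative (\<lambda>h. c * h $ i)) (at x)"
    by (auto intro!: bounded_linear_imp_has_derivative bounded_linear_const_mult)
  then show ?thesis
    by (simp add: partial_deriv_eq)
qed

lemma real_polynomial_function_component: "real_polynomial_function (\<lambda>x. x $ i)"
  by (intro real_polynomial_function.intros(1) bounded_linear_vec_nth)

lemma homogeneous_poly_real_polynomial_function:
  assumes "homogeneous_poly m Y"
  shows "real_polynomial_function Y"
proof -
  obtain a where Y: "Y = (\<lambda>x. \<Sum>\<alpha>\<in>{\<alpha>. sum \<alpha> UNIV = m}. a \<alpha> * (\<Prod>i\<in>UNIV. (x $ i) ^ \<alpha> i))"
    using assms unfolding homogeneous_poly_def by blast
  show ?thesis
  proof (cases "finite {\<alpha>::'a \<Rightarrow> nat. sum \<alpha> UNIV = m}")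
    case True
    then show ?thesis
      unfolding Y by (intro real_polynomial_function_sum real_polynomial_function.intros(2,4)
          real_polynomial_function_prod real_polynomial_function_power
          real_polynomial_function_component) auto
  qed (simp add: Y real_polynomial_function.intros(2))
qed

lemma homogeneous_poly_scaleR:
  assumes "homogeneous_poly m Y"
  shows "Y (c *\<^sub>R x) = c ^ m * Y x"
proof -
  obtain a where Y: "Y = (\<lambda>x. \<Sum>\<alpha>\<in>{\<alpha>. sum \<alpha> UNIV = m}. a \<alpha> * (\<Prod>i\<in>UNIV. (x $ i) ^ \<alpha> i))"
    using assms unfolding homogeneous_poly_def by blast
  have "(\<Prod>i\<in>UNIV. ((c *\<^sub>R x) $ i) ^ \<alpha> i) = c ^ m * (\<Prod>i\<in>UNIV. (x $ i) ^ \<alpha> i)"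
    if "sum \<alpha> UNIV = m" for \<alpha>
    using that by (simp add: power_mult_distrib prod.distrib flip: power_sum)
  then show ?thesis
    unfolding Y by (simp add: sum_distrib_left algebra_simps)
qed

lemma homogeneous_poly_euler:
  assumes "homogeneous_poly m Y"
  shows "(\<Sum>i\<in>UNIV. x $ i * partial_deriv i Y x) = real m * Y x"
proof -
  obtain Y' where Y': "\<And>x. (Y has_derivative Y' x) (at x)"
    using real_polynomial_function_has_derivative homogeneous_poly_real_polynomial_function[OF assms]
    by blast
  have "((\<lambda>c::real. c *\<^sub>R x) has_derivative (\<lambda>c. c *\<^sub>R x)) (at 1)"
    by (auto intro!: derivative_eq_intros)
  moreover have "(Y has_derivative Y' x) (at ((\<lambda>c::real. c *\<^sub>R x) 1))"
    using Y' by simp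
  ultimately have "((\<lambda>c. Y (c *\<^sub>R x)) has_derivative (\<lambda>c. Y' x (c *\<^sub>R x))) (at 1)"
    by (rule has_derivative_compose)
  then have "((\<lambda>c. Y (c *\<^sub>R x)) has_real_derivative Y' x x) (at 1)"
    using linear_scale[OF has_derivative_linear[OF Y']]
    by (simp add: has_field_derivative_def mult_commute_abs)
  moreover have "((\<lambda>c. Y (c *\<^sub>R x)) has_real_derivative real m * Y x) (at 1)"
    unfolding homogeneous_poly_scaleR[OF assms]
    by (auto intro!: derivative_eq_intros)
  ultimately have "Y' x x = real m * Y x"
    by (rule DERIV_unique)
  moreover have "Y' x x = (\<Sum>i\<in>UNIV. x $ i * Y' x (axis i 1))"
  proof -
    have "Y' x x = Y' x (\<Sum>i\<in>UNIV. x $ i *\<^sub>R axis i 1)"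
      using basis_expansion[of x] by (simp add: scalar_mult_eq_scaleR)
    then show ?thesis
      using has_derivative_linear[OF Y'] by (simp add: linear_sum linear_scale)
  qed
  ultimately show ?thesis
    by (simp add: partial_deriv_eq[OF Y'])
qed

section \<open>The Laplacian of a radial profile times a solid harmonic\<close>

lemma partial_deriv2_radial_times:
  fixes Y :: "real^'d::finite \<Rightarrow> real"
  assumes Y: "real_polynomial_function Y"
  defines "N \<equiv> \<lambda>x::real^'d. (norm x)\<^sup>2 - 1"
  shows "partial_deriv i (partial_deriv i (\<lambda>x. poly g (N x) * Y x)) x
     = (poly (pderiv (pderiv g)) (N x) * (2 * x $ i) * (2 * x $ i) + 2 * poly (pderiv g) (N x)) * Y x
       + 4 * poly (pderiv g) (N x) * (x $ i * partial_deriv i Y x)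
       + poly g (N x) * partial_deriv i (partial_deriv i Y) x"
proof -
  note diff = differentiable_at_real_polynomial_function
  note rpf_mult = real_polynomial_function.intros(4)
  note mult = partial_deriv_mult[OF diff diff]
  have rpf_N: "real_polynomial_function N"
    unfolding N_def power2_norm_eq_inner inner_vec_def
    by (auto intro!: real_polynomial_function_diff real_polynomial_function_sum
        real_polynomial_function.intros(2,4) real_polynomial_function_component)
  have rpf_gN: "real_polynomial_function (\<lambda>x. poly q (N x))" for q
    using rpf_N by (rule real_polynomial_function_poly)
  have rpf_coord: "real_polynomial_function (\<lambda>x::real^'d. 2 * x $ i)"
    by (intro rpf_mult real_polynomial_function.intros(2) real_polynomial_function_component)
  have rpf_dY: "real_polynomial_function (partial_deriv i Y)"
    using Y by (rule real_polynomial_function_partial_deriv)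
  have d_gN: "partial_deriv i (\<lambda>x. poly q (N x)) y = poly (pderiv q) (N y) * (2 * y $ i)" for q y
    using partial_deriv_poly_comp[OF diff[OF rpf_N]] partial_deriv_norm_sq
    unfolding N_def by metis
  have first: "partial_deriv i (\<lambda>x. poly g (N x) * Y x)
      = (\<lambda>y. poly (pderiv g) (N y) * (2 * y $ i) * Y y + poly g (N y) * partial_deriv i Y y)"
    by (rule ext) (simp add: mult[OF rpf_gN Y] d_gN)
  have "partial_deriv i (\<lambda>y. poly (pderiv g) (N y) * (2 * y $ i) * Y y) x
      = (poly (pderiv (pderiv g)) (N x) * (2 * x $ i) * (2 * x $ i) + 2 * poly (pderiv g) (N x)) * Y x
        + poly (pderiv g) (N x) * (2 * x $ i) * partial_deriv i Y x"
    by (simp add: mult[OF rpf_mult[OF rpf_gN rpf_coord] Y] mult[OF rpf_gN rpf_coord]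
        d_gN partial_deriv_scaled_component)
  moreover have "partial_deriv i (\<lambda>y. poly g (N y) * partial_deriv i Y y) x
      = poly (pderiv g) (N x) * (2 * x $ i) * partial_deriv i Y x
        + poly g (N x) * partial_deriv i (partial_deriv i Y) x"
    by (simp add: mult[OF rpf_gN rpf_dY] d_gN)
  moreover have "real_polynomial_function (\<lambda>y. poly (pderiv g) (N y) * (2 * y $ i) * Y y)"
    and "real_polynomial_function (\<lambda>y. poly g (N y) * partial_deriv i Y y)"
    by (intro rpf_mult rpf_gN rpf_coord Y rpf_dY)+
  note add = partial_deriv_add[OF diff[OF this(1)] diff[OF this(2)]]
  ultimately show ?thesis
    unfolding first add by (simp add: algebra_simps)
qed

definition radial_laplacian :: "nat \<Rightarrow> nat \<Rightarrow> real poly \<Rightarrow> real poly" where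
  "radial_laplacian m d g =
     smult 4 ([:1, 1:] * pderiv (pderiv g)) + smult (4 * real m + 2 * real d) (pderiv g)"

lemma laplacian_radial_times_harmonic:
  fixes Y :: "real^'d::finite \<Rightarrow> real"
  assumes "Y \<in> harmonic_space m"
  shows "laplacian (\<lambda>x. poly g ((norm x)\<^sup>2 - 1) * Y x)
       = (\<lambda>x. poly (radial_laplacian m CARD('d) g) ((norm x)\<^sup>2 - 1) * Y x)"
proof
  fix x :: "real^'d"
  define N where "N = (\<lambda>x::real^'d. (norm x)\<^sup>2 - 1)"
  have hom: "homogeneous_poly m Y" and harm: "laplacian Y = (\<lambda>_. 0)"
    using assms by (auto simp: harmonic_space_def)
  have second: "partial_deriv i (partial_deriv i (\<lambda>x. poly g (N x) * Y x)) x
     = (poly (pderiv (pderiv g)) (N x) * (2 * x $ i) * (2 * x $ i) + 2 * poly (pderiv g) (N x)) * Y x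
       + 4 * poly (pderiv g) (N x) * (x $ i * partial_deriv i Y x)
       + poly g (N x) * partial_deriv i (partial_deriv i Y) x" for i
    unfolding N_def
    by (rule partial_deriv2_radial_times[OF homogeneous_poly_real_polynomial_function[OF hom]])
  have sq: "(\<Sum>i\<in>UNIV. x $ i * x $ i) = N x + 1"
    by (simp add: N_def power2_norm_eq_inner inner_vec_def)
  have lap: "(\<Sum>i\<in>UNIV. partial_deriv i (partial_deriv i Y) x) = 0"
    using fun_cong[OF harm, of x] by (simp add: laplacian_def)
  have "laplacian (\<lambda>x. poly g (N x) * Y x) x
      = 4 * poly (pderiv (pderiv g)) (N x) * Y x * (\<Sum>i\<in>UNIV. x $ i * x $ i)
        + 2 * real CARD('d) * poly (pderiv g) (N x) * Y x
        + 4 * poly (pderiv g) (N x) * (\<Sum>i\<in>UNIV. x $ i * partial_deriv i Y x)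
        + poly g (N x) * (\<Sum>i\<in>UNIV. partial_deriv i (partial_deriv i Y) x)"
    unfolding laplacian_def second
    by (simp add: sum.distrib sum_distrib_left sum_distrib_right algebra_simps)
  also have "\<dots> = poly (radial_laplacian m CARD('d) g) (N x) * Y x"
    unfolding sq lap homogeneous_poly_euler[OF hom]
    by (simp add: radial_laplacian_def algebra_simps)
  finally show "laplacian (\<lambda>x. poly g ((norm x)\<^sup>2 - 1) * Y x) x
      = poly (radial_laplacian m CARD('d) g) ((norm x)\<^sup>2 - 1) * Y x"
    unfolding N_def .
qed

lemma funpow_laplacian_radial_times_harmonic:
  fixes Y :: "real^'d::finite \<Rightarrow> real"
  assumes "Y \<in> harmonic_space m"
  shows "(laplacian ^^ k) (\<lambda>x. poly g ((norm x)\<^sup>2 - 1) * Y x)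
       = (\<lambda>x. poly ((radial_laplacian m CARD('d) ^^ k) g) ((norm x)\<^sup>2 - 1) * Y x)"
  by (induction k) (simp_all add: laplacian_radial_times_harmonic[OF assms])

lemma coeff_radial_laplacian:
  "coeff (radial_laplacian m d g) p
     = 4 * (real p + 1) * (real p + real m + real d / 2) * coeff g (p + 1)
       + 4 * (real p + 1) * (real p + 2) * coeff g (p + 2)"
  by (cases p) (simp_all add: radial_laplacian_def coeff_pderiv numeral_2_eq_2 algebra_simps)

section \<open>Coefficients of the generalized Jacobi polynomials\<close>

definition jacobi_coeff :: "real \<Rightarrow> real \<Rightarrow> nat \<Rightarrow> nat \<Rightarrow> real" where
  "jacobi_coeff \<mu> \<beta> j p = (if p \<le> j then
     pochhammer (real j + \<beta> + 1) j * pochhammer (real p + \<mu> + 1) (j - p)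
       / (fact (j - p) * fact p * pochhammer (real j + \<mu> + \<beta> + real p + 1) (j - p))
     else 0)"

text \<open>The profile of \<open>Pbasis \<mu> (m + 2j) j\<close> in the variable \<open>u = \<parallel>x\<parallel>\<^sup>2 - 1 = (t - 1) / 2\<close>:
  the generalized Jacobi polynomial with parameters \<open>(\<mu>, \<beta>)\<close>, \<open>\<beta> = m + d/2 - 1\<close>, times the
  Pochhammer prefactor of \<open>Pbasis\<close>.\<close>
definition jacobi_poly :: "real \<Rightarrow> real \<Rightarrow> nat \<Rightarrow> real poly" where
  "jacobi_poly \<mu> \<beta> j = (\<Sum>p\<le>j. monom (jacobi_coeff \<mu> \<beta> j p) p)"

lemma coeff_jacobi_poly: "coeff (jacobi_poly \<mu> \<beta> j) p = jacobi_coeff \<mu> \<beta> j p"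
  by (simp add: jacobi_poly_def coeff_sum coeff_monom jacobi_coeff_def)

lemma pochhammer_double_step:
  assumes "1 \<le> j"
  shows "(real j + \<beta>) * pochhammer (real j + \<beta> + 1) j
       = (2 * real j + \<beta> - 1) * (2 * real j + \<beta>) * pochhammer (real j + \<beta>) (j - 1)"
proof -
  obtain i where j: "j = Suc i" using assms by (cases j) auto
  have "(real j + \<beta>) * pochhammer (real j + \<beta> + 1) j = pochhammer (real j + \<beta>) (Suc (Suc i))"
    unfolding j pochhammer_rec[of _ "Suc i"] by (simp add: add.assoc)
  also have "\<dots> = (2 * real j + \<beta> - 1) * (2 * real j + \<beta>) * pochhammer (real j + \<beta>) (j - 1)"
    unfolding j by (simp add: pochhammer_rec' algebra_simps)
  finally show ?thesis .
qed

lemma jacobi_coeff_last_step: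
  fixes \<mu> \<beta> :: real
  assumes "j = p + 1"
  shows "4 * (real p + 1) * (real p + \<beta> + 1) * jacobi_coeff \<mu> \<beta> j (p + 1)
       + 4 * (real p + 1) * (real p + 2) * jacobi_coeff \<mu> \<beta> j (p + 2)
       = 4 * (2 * real j + \<beta> - 1) * (2 * real j + \<beta>) * jacobi_coeff (\<mu> + 2) \<beta> (j - 1) p"
proof -
  define A where "A = pochhammer (real j + \<beta> + 1) j"
  define r where "r = real p + 1"
  have r: "r \<noteq> 0"
    unfolding r_def by linarith
  have c1: "jacobi_coeff \<mu> \<beta> j (p + 1) = A / (r * fact p)"
    using assms by (simp add: jacobi_coeff_def A_def r_def add_ac)
  have c2: "jacobi_coeff \<mu> \<beta> j (p + 2) = 0"
    using assms by (simp add: jacobi_coeff_def)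
  have c3: "jacobi_coeff (\<mu> + 2) \<beta> (j - 1) p = pochhammer (real j + \<beta>) (j - 1) / fact p"
    using assms by (simp add: jacobi_coeff_def add_ac)
  have "4 * (real p + 1) * (real p + \<beta> + 1) * jacobi_coeff \<mu> \<beta> j (p + 1)
      + 4 * (real p + 1) * (real p + 2) * jacobi_coeff \<mu> \<beta> j (p + 2)
      = 4 * ((real j + \<beta>) * A) / fact p"
    unfolding c1 c2 r_def[symmetric] using r by (simp add: assms field_simps)
  also have "\<dots> = 4 * (2 * real j + \<beta> - 1) * (2 * real j + \<beta>) * jacobi_coeff (\<mu> + 2) \<beta> (j - 1) p"
    unfolding c3 A_def using pochhammer_double_step[of j \<beta>] assms by (simp add: mult.assoc)
  finally show ?thesis .
qed

lemma jacobi_coeff_inner_closed_forms: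
  fixes \<mu> \<beta> :: real
  assumes j: "j = p + 2 + t"
  defines "X \<equiv> pochhammer (real p + \<mu> + 3) t"
    and "D \<equiv> pochhammer (real j + \<mu> + \<beta> + real p + 3) t"
    and "E \<equiv> real j + \<mu> + \<beta> + real p + 2"
  shows "pochhammer (real j + \<mu> + \<beta> + real p + 2) (j - p - 1) = E * D"
    and "jacobi_coeff \<mu> \<beta> j (p + 1) = pochhammer (real j + \<beta> + 1) j * ((real p + \<mu> + 2) * X)
           / ((real t + 1) * fact t * ((real p + 1) * fact p) * (E * D))"
    and "jacobi_coeff \<mu> \<beta> j (p + 2) = pochhammer (real j + \<beta> + 1) j * X
           / (fact t * ((real p + 2) * ((real p + 1) * fact p)) * D)"
    and "jacobi_coeff (\<mu> + 2) \<beta> (j - 1) p = pochhammer (real j + \<beta>) (j - 1) * ((real j + \<mu> + 1) * X)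
           / ((real t + 1) * fact t * fact p * (E * D))"
proof -
  have X1: "pochhammer (real (p + 1) + \<mu> + 1) (j - (p + 1)) = (real p + \<mu> + 2) * X"
    unfolding X_def j by (simp add: pochhammer_rec add_ac numeral_eq_Suc)
  have X2: "pochhammer (real (p + 2) + \<mu> + 1) (j - (p + 2)) = X"
    unfolding X_def j by (simp add: add_ac numeral_eq_Suc)
  have X3: "pochhammer (real p + (\<mu> + 2) + 1) (j - 1 - p) = (real j + \<mu> + 1) * X"
    unfolding X_def j by (simp add: pochhammer_rec' add_ac numeral_eq_Suc)
  have D1: "pochhammer (real j + \<mu> + \<beta> + real (p + 1) + 1) (j - (p + 1)) = E * D"
    unfolding D_def E_def j by (simp add: pochhammer_rec add_ac numeral_eq_Suc)
  have D2: "pochhammer (real j + \<mu> + \<beta> + real (p + 2) + 1) (j - (p + 2)) = D"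
    unfolding D_def j by (simp add: add_ac numeral_eq_Suc)
  have D3: "pochhammer (real (j - 1) + (\<mu> + 2) + \<beta> + real p + 1) (j - 1 - p) = E * D"
    unfolding D_def E_def j by (simp add: pochhammer_rec add_ac numeral_eq_Suc)
  have facts: "fact (j - (p + 1)) = (real t + 1) * fact t" "fact (j - (p + 2)) = fact t"
      "fact (j - 1 - p) = (real t + 1) * fact t"
      "fact (p + 1) = (real p + 1) * fact p" "fact (p + 2) = (real p + 2) * ((real p + 1) * fact p)"
    unfolding j by (simp_all add: numeral_eq_Suc add_ac)
  show "pochhammer (real j + \<mu> + \<beta> + real p + 2) (j - p - 1) = E * D"
    using D1 by (simp add: E_def add_ac)
  show "jacobi_coeff \<mu> \<beta> j (p + 1) = pochhammer (real j + \<beta> + 1) j * ((real p + \<mu> + 2) * X)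
      / ((real t + 1) * fact t * ((real p + 1) * fact p) * (E * D))"
    unfolding jacobi_coeff_def X1 D1 facts using j by simp
  show "jacobi_coeff \<mu> \<beta> j (p + 2) = pochhammer (real j + \<beta> + 1) j * X
      / (fact t * ((real p + 2) * ((real p + 1) * fact p)) * D)"
    unfolding jacobi_coeff_def X2 D2 facts using j by simp
  show "jacobi_coeff (\<mu> + 2) \<beta> (j - 1) p = pochhammer (real j + \<beta>) (j - 1) * ((real j + \<mu> + 1) * X)
      / ((real t + 1) * fact t * fact p * (E * D))"
    unfolding jacobi_coeff_def X3 D3 facts using j by (simp add: add_ac)
qed

lemma jacobi_coeff_inner_step:
  fixes \<mu> \<beta> :: real
  assumes j: "j = p + 2 + t"
    and nz: "pochhammer (real j + \<mu> + \<beta> + real p + 2) (j - p - 1) \<noteq> 0"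
  shows "4 * (real p + 1) * (real p + \<beta> + 1) * jacobi_coeff \<mu> \<beta> j (p + 1)
       + 4 * (real p + 1) * (real p + 2) * jacobi_coeff \<mu> \<beta> j (p + 2)
       = 4 * (2 * real j + \<beta> - 1) * (2 * real j + \<beta>) * jacobi_coeff (\<mu> + 2) \<beta> (j - 1) p"
proof -
  define A where "A = pochhammer (real j + \<beta> + 1) j"
  define X where "X = pochhammer (real p + \<mu> + 3) t"
  define D where "D = pochhammer (real j + \<mu> + \<beta> + real p + 3) t"
  define E where "E = real j + \<mu> + \<beta> + real p + 2"
  define r1 where "r1 = real p + 1"
  define r2 where "r2 = real p + 2"
  define s where "s = real t + 1"
  note closed = jacobi_coeff_inner_closed_forms[OF j, of \<mu> \<beta>,
      folded A_def X_def D_def E_def r1_def r2_def s_def]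
  have nonzero: "E \<noteq> 0" "D \<noteq> 0" "r1 \<noteq> 0" "r2 \<noteq> 0" "s \<noteq> 0"
    using nz[folded E_def] closed(1) unfolding r1_def r2_def s_def by auto
  define K where "K = A * X / (s * fact t * fact p * (E * D))"
  have "1 \<le> j"
    using j by simp
  have "4 * r1 * (real p + \<beta> + 1) * jacobi_coeff \<mu> \<beta> j (p + 1)
      + 4 * r1 * r2 * jacobi_coeff \<mu> \<beta> j (p + 2)
      = 4 * K * ((real p + \<beta> + 1) * (real p + \<mu> + 2) + s * E)"
    unfolding closed(2,3) K_def using nonzero by (simp add: field_simps)
  also have "\<dots> = 4 * K * ((real j + \<beta>) * (real j + \<mu> + 1))"
    unfolding s_def E_def j by (simp add: algebra_simps)
  also have "\<dots> = 4 * ((2 * real j + \<beta> - 1) * (2 * real j + \<beta>) * pochhammer (real j + \<beta>) (j - 1))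
      * (real j + \<mu> + 1) * X / (s * fact t * fact p * (E * D))"
    unfolding pochhammer_double_step[OF \<open>1 \<le> j\<close>, symmetric] K_def A_def
    using nonzero by (simp add: field_simps)
  also have "\<dots> = 4 * (2 * real j + \<beta> - 1) * (2 * real j + \<beta>) * jacobi_coeff (\<mu> + 2) \<beta> (j - 1) p"
    unfolding closed(4) by simp
  finally show ?thesis
    unfolding r1_def r2_def .
qed

lemma jacobi_coeff_recurrence:
  assumes "1 \<le> j"
    and "pochhammer (real j + \<mu> + \<beta> + real p + 2) (j - p - 1) \<noteq> 0"
  shows "4 * (real p + 1) * (real p + \<beta> + 1) * jacobi_coeff \<mu> \<beta> j (p + 1)
       + 4 * (real p + 1) * (real p + 2) * jacobi_coeff \<mu> \<beta> j (p + 2)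
       = 4 * (2 * real j + \<beta> - 1) * (2 * real j + \<beta>) * jacobi_coeff (\<mu> + 2) \<beta> (j - 1) p"
proof -
  consider "j \<le> p" | "j = p + 1" | t where "j = p + 2 + t"
    using le_Suc_ex[of "p + 2" j] by (cases "p + 2 \<le> j"; cases "j \<le> p") auto
  then show ?thesis
  proof cases
    case 1
    then show ?thesis using assms(1) by (auto simp: jacobi_coeff_def)
  qed (use jacobi_coeff_last_step jacobi_coeff_inner_step assms in blast)+
qed

lemma jac_j0_eqI:
  assumes "1 \<le> r" "r \<le> j" "real r = - real j - a - b"
  shows "jac_j0 a b j = r"
proof -
  have "jac_j0 a b j = nat \<lfloor>- real j - a - b\<rfloor>"
    using assms unfolding jac_j0_def by auto
  then show ?thesis
    unfolding assms(3)[symmetric] by simp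
qed

lemma jac_j0_nonzeroD:
  assumes "jac_j0 a b j \<noteq> 0"
  shows "1 \<le> jac_j0 a b j" "jac_j0 a b j \<le> j" "real (jac_j0 a b j) = - real j - a - b"
proof -
  obtain r :: nat where r: "1 \<le> r" "r \<le> j" "real r = - real j - a - b"
    using assms unfolding jac_j0_def by (auto split: if_splits)
  then show "1 \<le> jac_j0 a b j" "jac_j0 a b j \<le> j" "real (jac_j0 a b j) = - real j - a - b"
    using jac_j0_eqI[OF r] by simp_all
qed

lemma jacobi_denominator_eq_0_iff:
  "pochhammer (real j + a + b + real r + 1) (j - r) = 0 \<longleftrightarrow> r < jac_j0 a b j"
proof
  assume "pochhammer (real j + a + b + real r + 1) (j - r) = 0"
  then obtain k where k: "k < j - r" "real j + a + b + real r + 1 = - real k"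
    unfolding pochhammer_eq_0_iff by blast
  then have "jac_j0 a b j = r + k + 1"
    by (intro jac_j0_eqI) auto
  then show "r < jac_j0 a b j"
    by simp
next
  assume r: "r < jac_j0 a b j"
  note j0 = jac_j0_nonzeroD[of a b j]
  show "pochhammer (real j + a + b + real r + 1) (j - r) = 0"
    unfolding pochhammer_eq_0_iff
    using r j0 by (intro exI[of _ "jac_j0 a b j - r - 1"]) (auto simp: of_nat_diff)
qed

lemma jac_j0_shift:
  assumes "k \<le> j" "jac_j0 \<mu> \<beta> j \<le> q + k"
  shows "jac_j0 (\<mu> + 2 * real k) \<beta> (j - k) \<le> q"
proof (rule ccontr)
  assume gt: "\<not> ?thesis"
  then have "jac_j0 (\<mu> + 2 * real k) \<beta> (j - k) \<noteq> 0"
    by simp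
  note j0 = jac_j0_nonzeroD[OF this]
  have "jac_j0 \<mu> \<beta> j = jac_j0 (\<mu> + 2 * real k) \<beta> (j - k) + k"
    using j0 assms(1) by (intro jac_j0_eqI) (auto simp: of_nat_diff)
  then show False
    using assms(2) gt by simp
qed

lemma gen_jacobi_eq_full_sum:
  "gen_jacobi a b (int j) t = (\<Sum>k\<le>j. pochhammer (real k + a + 1) (j - k)
     / (fact (j - k) * fact k * pochhammer (real j + a + b + real k + 1) (j - k))
     * ((t - 1) / 2) ^ k)"
proof -
  have "jac_j0 a b j \<le> j"
    using jac_j0_nonzeroD(2) by (cases "jac_j0 a b j = 0") auto
  moreover have "pochhammer (real j + a + b + real k + 1) (j - k) = 0" if "k < jac_j0 a b j" for k
    using that jacobi_denominator_eq_0_iff by blast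
  ultimately show ?thesis
    unfolding gen_jacobi_def by (auto intro!: sum.mono_neutral_left)
qed

lemma Pbasis_eq_jacobi_poly:
  fixes Y :: "real^'d::finite \<Rightarrow> real"
  shows "Pbasis \<mu> (int m + 2 * int j) (int j) Y x
       = poly (jacobi_poly \<mu> (real m + real CARD('d) / 2 - 1) j) ((norm x)\<^sup>2 - 1) * Y x"
proof -
  define \<beta> where "\<beta> = real m + real CARD('d) / 2 - 1"
  have e1: "real_of_int (int m + 2 * int j - int j) + real CARD('d) / 2 = real j + \<beta> + 1"
    and e2: "real_of_int (int m + 2 * int j - 2 * int j) + real CARD('d) / 2 - 1 = \<beta>"
    and e3: "(2 * (norm x)\<^sup>2 - 1 - 1) / 2 = (norm x)\<^sup>2 - 1"
    unfolding \<beta>_def by simp_all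
  have "Pbasis \<mu> (int m + 2 * int j) (int j) Y x
     = pochhammer (real j + \<beta> + 1) j * (\<Sum>k\<le>j. pochhammer (real k + \<mu> + 1) (j - k)
        / (fact (j - k) * fact k * pochhammer (real j + \<mu> + \<beta> + real k + 1) (j - k))
        * ((norm x)\<^sup>2 - 1) ^ k) * Y x"
    unfolding Pbasis_def e1 e2 gen_jacobi_eq_full_sum e3 by simp
  also have "\<dots> = poly (jacobi_poly \<mu> \<beta> j) ((norm x)\<^sup>2 - 1) * Y x"
    unfolding jacobi_poly_def poly_sum poly_monom jacobi_coeff_def
    by (simp add: sum_distrib_left algebra_simps)
  finally show ?thesis
    unfolding \<beta>_def .
qed

section \<open>Iterated Laplacians\<close>

lemma coeff_radial_laplacian_jacobi_poly:
  assumes \<beta>: "\<beta> = real m + real d / 2 - 1"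
    and "1 \<le> j" and j0: "jac_j0 \<mu> \<beta> j \<le> p + 1"
  shows "coeff (radial_laplacian m d (jacobi_poly \<mu> \<beta> j)) p
       = 4 * (2 * real j + \<beta> - 1) * (2 * real j + \<beta>) * coeff (jacobi_poly (\<mu> + 2) \<beta> (j - 1)) p"
proof -
  have "pochhammer (real j + \<mu> + \<beta> + real (p + 1) + 1) (j - (p + 1)) \<noteq> 0"
    using j0 jacobi_denominator_eq_0_iff by (metis not_le)
  then have "pochhammer (real j + \<mu> + \<beta> + real p + 2) (j - p - 1) \<noteq> 0"
    by (simp add: add_ac)
  from jacobi_coeff_recurrence[OF \<open>1 \<le> j\<close> this] show ?thesis
    unfolding coeff_radial_laplacian coeff_jacobi_poly \<beta> by (simp add: algebra_simps)
qed

lemma pochhammer_lower_by_two: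
  "pochhammer (a - 2) (2 * k + 2) = (a - 2) * (a - 1) * pochhammer (a :: real) (2 * k)"
  using pochhammer_product'[of "a - 2" 2 "2 * k"]
  by (simp add: add.commute numeral_2_eq_2 pochhammer_rec)

lemma leading_factor_Suc:
  assumes "k < j"
  shows "4 ^ k * pochhammer (2 * real j + \<beta> + 1 - 2 * real k) (2 * k)
           * (4 * (2 * real (j - k) + \<beta> - 1) * (2 * real (j - k) + \<beta>))
       = 4 ^ Suc k * pochhammer (2 * real j + \<beta> + 1 - 2 * real (Suc k)) (2 * Suc k)"
proof -
  define a where "a = 2 * real j + \<beta> + 1 - 2 * real k"
  have e: "2 * real (j - k) + \<beta> - 1 = a - 2" "2 * real (j - k) + \<beta> = a - 1"
    "2 * real j + \<beta> + 1 - 2 * real (Suc k) = a - 2" "2 * Suc k = 2 * k + 2"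
    using assms unfolding a_def by (simp_all add: of_nat_diff)
  show ?thesis
    unfolding a_def[symmetric] e pochhammer_lower_by_two by (simp add: mult_ac)
qed

lemma coeff_funpow_radial_laplacian_jacobi_poly:
  assumes \<beta>: "\<beta> = real m + real d / 2 - 1"
    and "jac_j0 \<mu> \<beta> j \<le> p + k"
  shows "coeff ((radial_laplacian m d ^^ k) (jacobi_poly \<mu> \<beta> j)) p
       = (if k \<le> j then 4 ^ k * pochhammer (2 * real j + \<beta> + 1 - 2 * real k) (2 * k)
            * coeff (jacobi_poly (\<mu> + 2 * real k) \<beta> (j - k)) p else 0)"
  using assms(2)
proof (induction k arbitrary: p)
  case 0
  then show ?case by simp
next
  case (Suc k)
  define c where "c = 4 ^ k * pochhammer (2 * real j + \<beta> + 1 - 2 * real k) (2 * k)"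
  define Q where "Q = jacobi_poly (\<mu> + 2 * real k) \<beta> (j - k)"
  have "coeff ((radial_laplacian m d ^^ Suc k) (jacobi_poly \<mu> \<beta> j)) p
      = (if k \<le> j then c * coeff (radial_laplacian m d Q) p else 0)"
    using Suc.IH[of "p + 1"] Suc.IH[of "p + 2"] Suc.prems
    by (simp add: coeff_radial_laplacian c_def Q_def algebra_simps)
  also have "\<dots> = (if Suc k \<le> j then 4 ^ Suc k * pochhammer (2 * real j + \<beta> + 1 - 2 * real (Suc k)) (2 * Suc k)
            * coeff (jacobi_poly (\<mu> + 2 * real (Suc k)) \<beta> (j - Suc k)) p else 0)"
  proof (cases "Suc k \<le> j")
    case True
    define C where "C = 4 * (2 * real (j - k) + \<beta> - 1) * (2 * real (j - k) + \<beta>)"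
    have "jac_j0 (\<mu> + 2 * real k) \<beta> (j - k) \<le> p + 1"
      using jac_j0_shift[of k j \<mu> \<beta> "p + 1"] True Suc.prems by simp
    moreover have "1 \<le> j - k"
      using True by simp
    moreover have "\<mu> + 2 * real (Suc k) = \<mu> + 2 * real k + 2" "j - Suc k = j - k - 1"
      by simp_all
    ultimately have lap: "coeff (radial_laplacian m d Q) p
        = C * coeff (jacobi_poly (\<mu> + 2 * real (Suc k)) \<beta> (j - Suc k)) p"
      unfolding Q_def C_def by (simp only: coeff_radial_laplacian_jacobi_poly[OF \<beta>])
    have "c * C = 4 ^ Suc k * pochhammer (2 * real j + \<beta> + 1 - 2 * real (Suc k)) (2 * Suc k)"
      unfolding c_def C_def using True by (intro leading_factor_Suc) simp
    then show ?thesis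
      using True by (simp add: lap flip: mult.assoc)
  next
    case False
    then show ?thesis
      by (auto simp: Q_def coeff_radial_laplacian coeff_jacobi_poly jacobi_coeff_def)
  qed
  finally show ?case .
qed

section \<open>Negative first parameter\<close>

lemma pochhammer_of_nat_plus_one_fact:
  "pochhammer (real r + 1) t * fact r = (fact (r + t) :: real)"
  unfolding pochhammer_fact pochhammer_product' by (simp add: add.commute mult.commute)

lemma jacobi_coeff_neg_param_below:
  assumes "p < s" "s \<le> j"
  shows "jacobi_coeff (- real s) \<beta> j p = 0"
proof -
  have "pochhammer (real p + - real s + 1) (j - p) = 0"
    unfolding pochhammer_eq_0_iff using assms
    by (intro exI[of _ "s - 1 - p"]) (auto simp: of_nat_diff)
  then show ?thesis
    by (simp add: jacobi_coeff_def)
qed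

lemma jacobi_poly_neg_param:
  assumes s: "s \<le> j" and \<beta>: "\<beta> > -1"
  defines "C \<equiv> pochhammer (real j + \<beta> + 1) j * fact (j - s)
                 / (pochhammer (real (j - s) + \<beta> + 1) (j - s) * fact j)"
  shows "jacobi_poly (- real s) \<beta> j = smult C (monom 1 s * jacobi_poly (real s) \<beta> (j - s))"
proof (rule poly_eqI)
  fix p
  show "coeff (jacobi_poly (- real s) \<beta> j) p = coeff (smult C (monom 1 s * jacobi_poly (real s) \<beta> (j - s))) p"
  proof (cases "p < s")
    case True
    then show ?thesis
      using jacobi_coeff_neg_param_below[OF True s] by (simp add: coeff_jacobi_poly coeff_monom_mult)
  next
    case False
    then obtain r where p: "p = s + r"
      using le_Suc_ex not_less by blast
    show ?thesis
    proof (cases "r \<le> j - s")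
      case False
      then show ?thesis
        unfolding p by (simp add: coeff_jacobi_poly coeff_monom_mult jacobi_coeff_def)
    next
      case True
      define t where "t = j - s - r"
      have j: "j = s + r + t"
        unfolding t_def using True s by simp
      define D where "D = pochhammer (real j + \<beta> + real r + 1) t"
      have nonzero: "D \<noteq> 0" "pochhammer (real (j - s) + \<beta> + 1) (j - s) \<noteq> 0"
        "(fact j :: real) \<noteq> 0" "(fact r :: real) \<noteq> 0" "(fact t :: real) \<noteq> 0" "(fact (s + r) :: real) \<noteq> 0"
        unfolding D_def pochhammer_eq_0_iff using \<beta> by auto
      have "pochhammer (real (s + r) + - real s + 1) t = fact (j - s) / fact r"
        using pochhammer_of_nat_plus_one_fact[of r t] nonzero unfolding j by (simp add: field_simps)
      moreover have "pochhammer (real r + real s + 1) t = fact j / fact (s + r)"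
        using pochhammer_of_nat_plus_one_fact[of "s + r" t] nonzero unfolding j by (simp add: field_simps add_ac)
      moreover have "j - (s + r) = t" "j - s - r = t"
        unfolding j by simp_all
      ultimately have lhs: "coeff (jacobi_poly (- real s) \<beta> j) p
          = pochhammer (real j + \<beta> + 1) j * (fact (j - s) / fact r) / (fact t * fact (s + r) * D)"
        and rhs: "coeff (jacobi_poly (real s) \<beta> (j - s)) r
          = pochhammer (real (j - s) + \<beta> + 1) (j - s) * (fact j / fact (s + r)) / (fact t * fact r * D)"
        unfolding p coeff_jacobi_poly jacobi_coeff_def D_def using True s by (simp_all add: add_ac)
      have shift: "coeff (smult C (monom 1 s * jacobi_poly (real s) \<beta> (j - s))) p
          = C * coeff (jacobi_poly (real s) \<beta> (j - s)) r"
        unfolding p by (simp add: coeff_monom_mult)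
      show ?thesis
        unfolding lhs shift rhs unfolding C_def using nonzero by (simp add: field_simps)
    qed
  qed
qed

lemma jacobi_neg_param_constant_eq:
  fixes s j n m d :: nat
  assumes s: "s \<le> j" and n: "n = m + 2 * j"
  defines "\<beta> \<equiv> real m + real d / 2 - 1"
  shows "pochhammer (1 - real n - real d / 2) j
           / (pochhammer (- real j) s * pochhammer (1 - real n - real d / 2 + 2 * real s) (j - s))
       = pochhammer (real j + \<beta> + 1) j * fact (j - s)
           / (pochhammer (real (j - s) + \<beta> + 1) (j - s) * fact j)"
proof -
  have a: "pochhammer (1 - real n - real d / 2) j = (-1) ^ j * pochhammer (real j + \<beta> + 1) j"
  proof -
    have "1 - real n - real d / 2 = - (real n + real d / 2 - 1)"
      and "real n + real d / 2 - 1 - real j + 1 = real j + \<beta> + 1"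
      unfolding n \<beta>_def by simp_all
    then show ?thesis
      by (simp only: pochhammer_minus)
  qed
  have b: "pochhammer (- real j) s = (-1) ^ s * (fact j / fact (j - s))"
  proof -
    have "pochhammer (real j - real s + 1) s = fact j / fact (j - s)"
      using pochhammer_of_nat_plus_one_fact[of "j - s" s] s by (simp add: of_nat_diff field_simps)
    then show ?thesis
      by (simp add: pochhammer_minus)
  qed
  have c: "pochhammer (1 - real n - real d / 2 + 2 * real s) (j - s)
      = (-1) ^ (j - s) * pochhammer (real (j - s) + \<beta> + 1) (j - s)"
  proof -
    have "1 - real n - real d / 2 + 2 * real s = - (real n + real d / 2 - 2 * real s - 1)"
      and "real n + real d / 2 - 2 * real s - 1 - real (j - s) + 1 = real (j - s) + \<beta> + 1"
      unfolding n \<beta>_def using s by (simp_all add: of_nat_diff)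
    then show ?thesis
      by (simp only: pochhammer_minus)
  qed
  have "(-1::real) ^ j = (-1) ^ s * (-1) ^ (j - s)"
    using s by (simp flip: power_add)
  then show ?thesis
    unfolding a b c by (simp add: field_simps)
qed

lemma half_dimension_shift_gt: "real m + real CARD('d::finite) / 2 - 1 > -1"
proof -
  have "0 < real CARD('d)"
    by simp
  then show ?thesis
    using of_nat_0_le_iff[of m] by linarith
qed

lemma Pbasis_neg_param_eq:
  fixes Y :: "real^'d::finite \<Rightarrow> real"
  assumes s: "s \<le> j" and n: "n = m + 2 * j"
  shows "Pbasis (- real s) (int n) (int j) Y x =
           pochhammer (1 - real n - real CARD('d) / 2) j
           / (pochhammer (- real j) s * pochhammer (1 - real n - real CARD('d) / 2 + 2 * real s) (j - s))
           * ((norm x)\<^sup>2 - 1) ^ s * Pbasis (real s) (int n - 2 * int s) (int j - int s) Y x"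
proof -
  define \<beta> where "\<beta> = real m + real CARD('d) / 2 - 1"
  have "\<beta> > -1"
    unfolding \<beta>_def by (rule half_dimension_shift_gt)
  have e: "int n = int m + 2 * int j" "int n - 2 * int s = int m + 2 * int (j - s)"
    "int j - int s = int (j - s)"
    using s n by simp_all
  show ?thesis
    unfolding e(2,3) unfolding e(1) jacobi_neg_param_constant_eq[OF s n] Pbasis_eq_jacobi_poly
      \<beta>_def[symmetric] jacobi_poly_neg_param[OF s \<open>\<beta> > -1\<close>]
    by (simp add: poly_monom)
qed

lemma funpow_radial_laplacian_jacobi_poly:
  assumes "\<beta> = real m + real d / 2 - 1"
  obtains q where "(radial_laplacian m d ^^ k) (jacobi_poly \<mu> \<beta> j)
      = smult (4 ^ k * pochhammer (2 * real j + \<beta> + 1 - 2 * real k) (2 * k))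
          (if k \<le> j then jacobi_poly (\<mu> + 2 * real k) \<beta> (j - k) else 0) + q"
    and "q = 0 \<or> degree q + k + 1 \<le> jac_j0 \<mu> \<beta> j"
proof -
  define q where "q = (radial_laplacian m d ^^ k) (jacobi_poly \<mu> \<beta> j)
      - smult (4 ^ k * pochhammer (2 * real j + \<beta> + 1 - 2 * real k) (2 * k))
          (if k \<le> j then jacobi_poly (\<mu> + 2 * real k) \<beta> (j - k) else 0)"
  have "coeff q p = 0" if "jac_j0 \<mu> \<beta> j \<le> p + k" for p
    unfolding q_def using coeff_funpow_radial_laplacian_jacobi_poly[OF assms that] by simp
  then have deg: "q = 0 \<or> degree q + k + 1 \<le> jac_j0 \<mu> \<beta> j"
    using leading_coeff_0_iff[of q] by (metis Suc_eq_plus1 not_less_eq_eq)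
  have "(radial_laplacian m d ^^ k) (jacobi_poly \<mu> \<beta> j)
      = smult (4 ^ k * pochhammer (2 * real j + \<beta> + 1 - 2 * real k) (2 * k))
          (if k \<le> j then jacobi_poly (\<mu> + 2 * real k) \<beta> (j - k) else 0) + q"
    by (simp add: q_def)
  from that[OF this deg] show ?thesis .
qed

lemma funpow_laplacian_Pbasis:
  fixes Y :: "real^'d::finite \<Rightarrow> real"
  assumes Y: "Y \<in> harmonic_space m" and n: "n = m + 2 * j"
  obtains q :: "real poly"
  where "q = 0 \<or> degree q + k + 1 \<le> jac_j0 \<mu> (real m + real CARD('d) / 2 - 1) j"
    and "\<And>x. (laplacian ^^ k) (Pbasis \<mu> (int n) (int j) Y) x =
           4 ^ k * pochhammer (real n + real CARD('d) / 2 - 2 * real k) (2 * k)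
             * Pbasis (\<mu> + 2 * real k) (int n - 2 * int k) (int j - int k) Y x
           + poly q ((norm x)\<^sup>2) * Y x"
proof -
  define \<beta> where "\<beta> = real m + real CARD('d) / 2 - 1"
  have "2 * real j + \<beta> + 1 - 2 * real k = real n + real CARD('d) / 2 - 2 * real k"
    unfolding \<beta>_def n by simp
  from funpow_radial_laplacian_jacobi_poly[OF \<beta>_def, of k \<mu> j, unfolded this]
  obtain r where r: "(radial_laplacian m CARD('d) ^^ k) (jacobi_poly \<mu> \<beta> j)
      = smult (4 ^ k * pochhammer (real n + real CARD('d) / 2 - 2 * real k) (2 * k))
          (if k \<le> j then jacobi_poly (\<mu> + 2 * real k) \<beta> (j - k) else 0) + r"
    and deg: "r = 0 \<or> degree r + k + 1 \<le> jac_j0 \<mu> \<beta> j" .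
  have Pbasis: "Pbasis \<mu>' (int m + 2 * int i) (int i) Y
      = (\<lambda>x. poly (jacobi_poly \<mu>' \<beta> i) ((norm x)\<^sup>2 - 1) * Y x)" for \<mu>' i
    unfolding \<beta>_def by (rule ext) (rule Pbasis_eq_jacobi_poly)
  have "int n = int m + 2 * int j"
    using n by simp
  have shifted: "Pbasis (\<mu> + 2 * real k) (int n - 2 * int k) (int j - int k) Y x
      = poly (if k \<le> j then jacobi_poly (\<mu> + 2 * real k) \<beta> (j - k) else 0) ((norm x)\<^sup>2 - 1) * Y x" for x
  proof (cases "k \<le> j")
    case True
    then have e: "int n - 2 * int k = int m + 2 * int (j - k)" "int j - int k = int (j - k)"
      using n by simp_all
    show ?thesis
      unfolding e Pbasis using True by simp
  qed (simp add: Pbasis_def)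
  have "(laplacian ^^ k) (Pbasis \<mu> (int n) (int j) Y) x =
      4 ^ k * pochhammer (real n + real CARD('d) / 2 - 2 * real k) (2 * k)
        * Pbasis (\<mu> + 2 * real k) (int n - 2 * int k) (int j - int k) Y x
      + poly (pcompose r [:-1, 1:]) ((norm x)\<^sup>2) * Y x" for x
    unfolding shifted unfolding \<open>int n = int m + 2 * int j\<close> Pbasis
      funpow_laplacian_radial_times_harmonic[OF Y] r
    by (simp add: poly_pcompose algebra_simps)
  moreover have "pcompose r [:-1, 1:] = 0 \<or> degree (pcompose r [:-1, 1:]) + k + 1 \<le> jac_j0 \<mu> \<beta> j"
    using deg by (auto simp: degree_pcompose pcompose_eq_0)
  ultimately show ?thesis
    using that unfolding \<beta>_def by blast
qed

lemma jac_j0_neg_param_le: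
  assumes "\<beta> > -1" "s \<le> j + k"
  shows "jac_j0 (- real s) \<beta> j \<le> k"
proof (cases "jac_j0 (- real s) \<beta> j = 0")
  case False
  then have "real (jac_j0 (- real s) \<beta> j) = real s - real j - \<beta>"
    using jac_j0_nonzeroD(3) by fastforce
  then show ?thesis
    using assms by linarith
qed simp

theorem lemma3p2:
  fixes s k n j :: nat and Y :: "real^'d::finite \<Rightarrow> real"
  assumes "s \<ge> 1"
    and "2 * j \<le> n"
    and "Y \<in> harmonic_space (n - 2 * j)"
  shows "(s \<le> j \<longrightarrow> (\<forall>x.
            Pbasis (- real s) (int n) (int j) Y x =
              pochhammer (1 - real n - real CARD('d) / 2) j
              / (pochhammer (- real j) s * pochhammer (1 - real n - real CARD('d) / 2 + 2 * real s) (j - s))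
              * ((norm x)\<^sup>2 - 1) ^ s * Pbasis (real s) (int n - 2 * int s) (int j - int s) Y x))
       \<and> (\<exists>q :: real poly.
            (q = 0 \<or> int (degree q) \<le>
               int (jac_j0 (- real s) (real n - 2 * real j + real CARD('d) / 2 - 1) j) - int k - 1)
          \<and> (s \<le> j + k \<longrightarrow> q = 0)
          \<and> (\<forall>x. (laplacian ^^ k) (Pbasis (- real s) (int n) (int j) Y) x =
                 4 ^ k * pochhammer (real n + real CARD('d) / 2 - 2 * real k) (2 * k)
                   * Pbasis (2 * real k - real s) (int n - 2 * int k) (int j - int k) Y x
                 + poly q ((norm x)\<^sup>2) * Y x))"
proof -
  define m where "m = n - 2 * j"
  have n: "n = m + 2 * j"
    using assms(2) unfolding m_def by simp
  define \<beta> where "\<beta> = real m + real CARD('d) / 2 - 1"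
  have \<beta>: "real n - 2 * real j + real CARD('d) / 2 - 1 = \<beta>" "\<beta> > -1"
    unfolding \<beta>_def n using half_dimension_shift_gt by simp_all
  obtain q where deg: "q = 0 \<or> degree q + k + 1 \<le> jac_j0 (- real s) \<beta> j"
    and lap: "\<And>x. (laplacian ^^ k) (Pbasis (- real s) (int n) (int j) Y) x =
           4 ^ k * pochhammer (real n + real CARD('d) / 2 - 2 * real k) (2 * k)
             * Pbasis (- real s + 2 * real k) (int n - 2 * int k) (int j - int k) Y x
           + poly q ((norm x)\<^sup>2) * Y x"
    using funpow_laplacian_Pbasis[OF assms(3)[folded m_def] n] unfolding \<beta>_def by blast
  have "q = 0 \<or> int (degree q) \<le> int (jac_j0 (- real s) \<beta> j) - int k - 1"
    using deg by linarith
  moreover have "s \<le> j + k \<longrightarrow> q = 0"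
    using deg jac_j0_neg_param_le[OF \<beta>(2)] by fastforce
  moreover have "2 * real k - real s = - real s + 2 * real k"
    by simp
  ultimately show ?thesis
    using Pbasis_neg_param_eq[OF _ n] lap unfolding \<beta>(1)
    by (intro conjI impI allI exI[of _ q]) simp_all
qed

end
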